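(* Let $\eta>0$, $L>0$, and for each $t$ let $\widehat\varphi_t$ be a convex function with $C\subset\operatorname{dom}\partial\widehat\varphi_t$ whose subdifferential is $L$-Lipschitz on $C$, i.e. $\|g-h\|\le L\|x-y\|$ for all $x,y\in C$, $g\in\partial\widehat\varphi_t(x)$, $h\in\partial\widehat\varphi_t(y)$. Run OGP: $\widetilde{x}_{t+1}=P_C(\widetilde{x}_t-\eta x_t^* )$ with $x_t^*\in\partial\varphi_t(x_t)$, $x_{t+1}=P_C(\widetilde{x}_{t+1}-\eta\widehat{x}_{t+1}^* )$, $\widetilde x_1\in C$, with predictions $\widehat{x}_t^*\in\partial\widehat\varphi_t(\widetilde{x}_t)$. Then for every $T\ge1$ and every $z_1,\dots,z_T\in C$, with $P_T=\sum_{t=2}^T\|z_t-z_{t-1}\|$, $$\sum_{t=1}^T\varphi_t(x_t)-\varphi_t(z_t)\le \frac{\rho(\rho+2P_T)}{2\eta}+\eta\sum_{t=1}^T\Big(\sup_{x\in C,\ g\in\partial\varphi_t(x),\ \widehat g\in\partial\widehat\varphi_t(x)}\|g-\widehat g\|^2+\mathbf 1\{\eta>\tfrac{1}{\sqrt2 L}\}\,L^2\|x_t-\widetilde{x}_t\|^2\Big).$$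
   Context: $H$ is a real Hilbert space; $C\subset H$ is nonempty, closed, convex with diameter $\rho=\sup_{x,y\in C}\|x-y\|<\infty$; $P_C$ is the metric projection onto $C$; each loss $\varphi_t$ is convex with $C\subset\operatorname{dom}\partial\varphi_t$; $\mathbf 1\{\cdot\}$ is the zero-one indicator. *)

theory Defs
  imports "HOL-Analysis.Analysis"
begin

definition ereal_convex :: "('a::real_vector \<Rightarrow> ereal) \<Rightarrow> bool" where
  "ereal_convex f \<longleftrightarrow> convex {(x, r::real). f x \<le> ereal r}"

definition subdiff :: "('a::real_inner \<Rightarrow> ereal) \<Rightarrow> 'a \<Rightarrow> 'a set" where
  "subdiff f x = {g. f x \<noteq> \<infinity> \<and> f x \<noteq> -\<infinity> \<and>
       (\<forall>y. f y \<ge> f x + ereal (g \<bullet> (y - x)))}"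

definition dom_subdiff :: "('a::real_inner \<Rightarrow> ereal) \<Rightarrow> 'a set" where
  "dom_subdiff f = {x. subdiff f x \<noteq> {}}"

definition metric_proj :: "'a::real_inner set \<Rightarrow> 'a \<Rightarrow> 'a" where
  "metric_proj C y = (THE p. p \<in> C \<and> (\<forall>z\<in>C. norm (y - p) \<le> norm (y - z)))"

end

theory Submission
  imports Defs
begin

text \<open>
  Each round, the projection inequalities defining the two iterates, rewritten with the
  three-point identity, bound the linearised regret \<open>xs t \<bullet> (x t - z)\<close> by
  \<open>(\<parallel>xt t - z\<parallel>\<^sup>2 - \<parallel>xt (t + 1) - z\<parallel>\<^sup>2) / (2\<eta>)\<close>, plus \<open>\<eta>\<close> times the squared error of
  the predicted gradient, minus \<open>\<parallel>x t - xt t\<parallel>\<^sup>2 / 2\<close>. Measuring the prediction error against a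
  subgradient of \<open>\<phi>h t\<close> at \<open>x t\<close> instead of at \<open>xt t\<close> costs an extra
  \<open>L\<^sup>2 \<parallel>x t - xt t\<parallel>\<^sup>2\<close>, which the negative term absorbs as soon as \<open>2 \<eta>\<^sup>2 L\<^sup>2 \<le> 1\<close>.
  Summed over the rounds the squared distances telescope, except where the comparator moves,
  and a move from \<open>z (t - 1)\<close> to \<open>z t\<close> costs at most \<open>2\<rho> \<parallel>z t - z (t - 1)\<parallel>\<close>.
\<close>

lemma parallelogram_law:
  fixes a b :: "'a::real_inner"
  shows "(norm (a - b))\<^sup>2 + (norm (a + b))\<^sup>2 = 2 * (norm a)\<^sup>2 + 2 * (norm b)\<^sup>2"
  by (simp add: power2_norm_eq_inner inner_add inner_diff inner_commute algebra_simps)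

lemma power2_norm_add_le:
  fixes a b :: "'a::real_inner"
  shows "(norm (a + b))\<^sup>2 \<le> 2 * (norm a)\<^sup>2 + 2 * (norm b)\<^sup>2"
  using parallelogram_law[of a b] zero_le_power2[of "norm (a - b)"] by linarith

lemma inner_le_half_power2_norms:
  fixes a b :: "'a::real_inner"
  shows "inner a b \<le> ((norm a)\<^sup>2 + (norm b)\<^sup>2) / 2"
  unfolding dot_norm_neg by simp

lemma convex_power2_norm_diff_le:
  fixes C :: "'a::real_inner set"
  assumes "convex C" "p \<in> C" "q \<in> C"
  shows "(norm (p - q))\<^sup>2 \<le> 2 * (dist y p)\<^sup>2 + 2 * (dist y q)\<^sup>2 - 4 * (infdist y C)\<^sup>2"
proof -
  define m where "m = (1/2) *\<^sub>R p + (1/2) *\<^sub>R q"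
  have "m \<in> C" unfolding m_def using assms by (intro convexD) auto
  have "(y - q) + (y - p) = 2 *\<^sub>R (y - m)"
    by (simp add: m_def algebra_simps scaleR_2)
  then have "norm ((y - q) + (y - p)) = 2 * dist y m"
    by (simp add: dist_norm)
  also have "\<dots> \<ge> 2 * infdist y C"
    using infdist_le[OF \<open>m \<in> C\<close>] by simp
  finally have "(2 * infdist y C)\<^sup>2 \<le> (norm ((y - q) + (y - p)))\<^sup>2"
    using infdist_nonneg by (intro power_mono) auto
  then show ?thesis
    using parallelogram_law[of "y - q" "y - p"] by (simp add: dist_norm power_mult_distrib)
qed

lemma infdist_minimizing_sequence:
  fixes C :: "'a::metric_space set"
  assumes "C \<noteq> {}"
  obtains p where "\<And>n. p n \<in> C" "(\<lambda>n. dist y (p n)) \<longlonglongrightarrow> infdist y C"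
proof -
  have "\<exists>p\<in>C. dist y p < infdist y C + inverse (real (Suc n))" for n
  proof -
    have "Inf (dist y ` C) < infdist y C + inverse (real (Suc n))"
      using infdist_notempty[OF assms, of y] by simp
    then show ?thesis
      using assms by (subst (asm) cInf_less_iff) auto
  qed
  then obtain p where pC: "\<And>n. p n \<in> C"
    and p_near: "\<And>n. dist y (p n) < infdist y C + inverse (real (Suc n))"
    by metis
  have "(\<lambda>n. dist y (p n)) \<longlonglongrightarrow> infdist y C"
  proof (rule tendsto_sandwich)
    show "\<forall>\<^sub>F n in sequentially. infdist y C \<le> dist y (p n)"
      using pC by (simp add: infdist_le)
    show "\<forall>\<^sub>F n in sequentially. dist y (p n) \<le> infdist y C + inverse (real (Suc n))"
      using p_near by (simp add: less_imp_le)
  qed (simp_all only: tendsto_const LIMSEQ_inverse_real_of_nat_add)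
  with pC that show ?thesis by blast
qed

lemma convex_minimizing_sequence_Cauchy:
  fixes C :: "'a::real_inner set"
  assumes "convex C" "\<And>n. p n \<in> C" "(\<lambda>n. dist y (p n)) \<longlonglongrightarrow> infdist y C"
  shows "Cauchy p"
proof (rule metric_CauchyI)
  fix e :: real assume "0 < e"
  have "(\<lambda>n. (dist y (p n))\<^sup>2) \<longlonglongrightarrow> (infdist y C)\<^sup>2"
    using assms(3) by (intro tendsto_intros)
  then have "\<forall>\<^sub>F n in sequentially. (dist y (p n))\<^sup>2 < (infdist y C)\<^sup>2 + e\<^sup>2 / 4"
    using \<open>0 < e\<close> by (intro order_tendstoD) auto
  then obtain M where M: "\<And>n. n \<ge> M \<Longrightarrow> (dist y (p n))\<^sup>2 < (infdist y C)\<^sup>2 + e\<^sup>2 / 4"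
    unfolding eventually_sequentially by blast
  have "dist (p m) (p n) < e" if "m \<ge> M" "n \<ge> M" for m n
  proof -
    have "(norm (p m - p n))\<^sup>2 < e\<^sup>2"
      using convex_power2_norm_diff_le[OF assms(1,2,2), of m n y] M[OF \<open>m \<ge> M\<close>] M[OF \<open>n \<ge> M\<close>]
      by simp
    then show ?thesis
      using \<open>0 < e\<close> by (simp add: dist_norm power2_less_imp_less)
  qed
  then show "\<exists>M. \<forall>m\<ge>M. \<forall>n\<ge>M. dist (p m) (p n) < e" by blast
qed

lemma closest_point_exists_complete:
  fixes C :: "'a::{real_inner, complete_space} set"
  assumes "C \<noteq> {}" "closed C" "convex C"
  obtains p where "p \<in> C" "\<forall>z\<in>C. dist y p \<le> dist y z"
proof -
  obtain p where pC: "\<And>n. p n \<in> C" and lim: "(\<lambda>n. dist y (p n)) \<longlonglongrightarrow> infdist y C"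
    using infdist_minimizing_sequence[OF \<open>C \<noteq> {}\<close>, of y] by blast
  then have "Cauchy p"
    using convex_minimizing_sequence_Cauchy[OF \<open>convex C\<close>] by blast
  then obtain q where q: "p \<longlonglongrightarrow> q"
    using Cauchy_convergent convergent_def by blast
  have "q \<in> C" using closed_sequentially[OF \<open>closed C\<close> pC q] .
  moreover have "dist y q = infdist y C"
    using tendsto_unique[OF _ tendsto_dist[OF tendsto_const q] lim] by simp
  ultimately show ?thesis
    using that by (simp add: infdist_le)
qed

lemma metric_proj_closest:
  fixes C :: "'a::{real_inner, complete_space} set"
  assumes "C \<noteq> {}" "closed C" "convex C"
  shows "metric_proj C y \<in> C" "\<forall>z\<in>C. dist y (metric_proj C y) \<le> dist y z"
proof -
  obtain p where p: "p \<in> C" "\<forall>z\<in>C. dist y p \<le> dist y z"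
    using closest_point_exists_complete[OF assms] .
  have "metric_proj C y = p"
    unfolding metric_proj_def
  proof (rule the_equality)
    show "p \<in> C \<and> (\<forall>z\<in>C. norm (y - p) \<le> norm (y - z))"
      using p by (simp add: dist_norm)
  next
    fix p' assume "p' \<in> C \<and> (\<forall>z\<in>C. norm (y - p') \<le> norm (y - z))"
    then show "p' = p"
      using any_closest_point_unique[OF \<open>convex C\<close> \<open>closed C\<close> _ p(1), of p' y] p(2)
      by (simp add: dist_norm)
  qed
  with p show "metric_proj C y \<in> C" "\<forall>z\<in>C. dist y (metric_proj C y) \<le> dist y z"
    by simp_all
qed

lemma metric_proj_obtuse:
  fixes C :: "'a::{real_inner, complete_space} set"
  assumes "C \<noteq> {}" "closed C" "convex C" "z \<in> C"
  shows "inner (y - metric_proj C y) (z - metric_proj C y) \<le> 0"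
  using any_closest_point_dot[OF \<open>convex C\<close> \<open>closed C\<close> metric_proj_closest(1)[OF assms(1-3)]
      \<open>z \<in> C\<close> metric_proj_closest(2)[OF assms(1-3)]] .

lemma inner_le_of_obtuse:
  fixes u w z a :: "'a::real_inner"
  assumes "inner (u - a - w) (z - w) \<le> 0"
  shows "inner a (w - z) \<le> ((norm (u - z))\<^sup>2 - (norm (w - z))\<^sup>2 - (norm (u - w))\<^sup>2) / 2"
proof -
  have "inner a (w - z) \<le> inner (u - w) (w - z)"
    using assms by (simp add: inner_diff_left inner_diff_right inner_commute)
  also have "\<dots> = ((norm (u - z))\<^sup>2 - (norm (u - w))\<^sup>2 - (norm (w - z))\<^sup>2) / 2"
    using dot_norm[of "u - w" "w - z"] by simp
  finally show ?thesis by simp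
qed

lemma small_step_size_absorbs:
  fixes \<eta> L r :: real
  assumes "\<eta> > 0" "L > 0" "r \<ge> 0"
  shows "\<eta>\<^sup>2 * L\<^sup>2 * r \<le> r / 2 + \<eta>\<^sup>2 * (if \<eta> > 1 / (sqrt 2 * L) then 1 else 0) * L\<^sup>2 * r"
proof (cases "\<eta> > 1 / (sqrt 2 * L)")
  case False
  then have "\<eta> * (sqrt 2 * L) \<le> 1"
    using assms by (simp add: field_simps)
  then have "(\<eta> * (sqrt 2 * L))\<^sup>2 \<le> 1"
    using assms by (simp add: power_le_one)
  then have "2 * (\<eta>\<^sup>2 * L\<^sup>2) \<le> 1"
    by (simp add: power_mult_distrib)
  then show ?thesis
    using False assms mult_right_mono[of "2 * (\<eta>\<^sup>2 * L\<^sup>2)" 1 r] by simp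
qed (use assms in simp)

text \<open>In the application \<open>u\<close>, \<open>w\<close>, \<open>v\<close> are \<open>xt t\<close>, \<open>xt (t + 1)\<close>, \<open>x t\<close>, and \<open>q\<close> is a
  subgradient of the predicted loss at \<open>v\<close>.\<close>

lemma optimistic_step_bound:
  fixes u w v z g h q :: "'a::real_inner"
  assumes eta: "\<eta> > 0" and L: "L > 0"
    and proj_w: "inner (u - \<eta> *\<^sub>R g - w) (z - w) \<le> 0"
    and proj_v: "inner (u - \<eta> *\<^sub>R h - v) (w - v) \<le> 0"
    and lip: "norm (q - h) \<le> L * norm (v - u)"
  shows "inner g (v - z) \<le> ((norm (u - z))\<^sup>2 - (norm (w - z))\<^sup>2) / (2 * \<eta>)
     + \<eta> * ((norm (g - q))\<^sup>2 + (if \<eta> > 1 / (sqrt 2 * L) then 1 else 0) * L\<^sup>2 * (norm (v - u))\<^sup>2)"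
proof -
  define I :: real where "I = (if \<eta> > 1 / (sqrt 2 * L) then 1 else 0)"
  define r where "r = (norm (v - u))\<^sup>2"
  define D where "D = (norm (u - z))\<^sup>2 - (norm (w - z))\<^sup>2"
  have w_step: "\<eta> * inner g (w - z) \<le> (D - (norm (u - w))\<^sup>2) / 2"
    using inner_le_of_obtuse[OF proj_w] by (simp add: D_def)
  have v_step: "\<eta> * inner h (v - w) \<le> ((norm (u - w))\<^sup>2 - (norm (v - w))\<^sup>2 - r) / 2"
    using inner_le_of_obtuse[OF proj_v] by (simp add: r_def norm_minus_commute)
  have young: "\<eta> * inner (g - h) (v - w) \<le> (\<eta>\<^sup>2 * (norm (g - h))\<^sup>2 + (norm (v - w))\<^sup>2) / 2"
    using inner_le_half_power2_norms[of "\<eta> *\<^sub>R (g - h)" "v - w"] eta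
    by (simp add: power_mult_distrib)
  have "(norm (q - h))\<^sup>2 \<le> L\<^sup>2 * r"
    using lip by (simp add: r_def power_mono flip: power_mult_distrib)
  then have gap: "(norm (g - h))\<^sup>2 \<le> 2 * (norm (g - q))\<^sup>2 + 2 * L\<^sup>2 * r"
    using power2_norm_add_le[of "g - q" "q - h"] by simp
  have small_step: "\<eta>\<^sup>2 * L\<^sup>2 * r \<le> r / 2 + \<eta>\<^sup>2 * I * L\<^sup>2 * r"
    using small_step_size_absorbs[OF eta L, of r] by (simp add: I_def r_def)
  have "\<eta> * inner g (v - z)
      = \<eta> * inner g (w - z) + \<eta> * inner h (v - w) + \<eta> * inner (g - h) (v - w)"
    by (simp add: inner_diff_left inner_diff_right algebra_simps)
  also have "\<dots> \<le> D / 2 + \<eta>\<^sup>2 * (norm (g - h))\<^sup>2 / 2 - r / 2"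
    using w_step v_step young by simp
  also have "\<dots> \<le> D / 2 + \<eta>\<^sup>2 * ((norm (g - q))\<^sup>2 + L\<^sup>2 * r) - r / 2"
    using mult_left_mono[OF gap, of "\<eta>\<^sup>2"] by (simp add: algebra_simps)
  also have "\<dots> \<le> D / 2 + \<eta>\<^sup>2 * ((norm (g - q))\<^sup>2 + I * L\<^sup>2 * r)"
    using small_step by (simp add: algebra_simps)
  finally show ?thesis
    using eta by (simp add: I_def r_def D_def field_simps power2_eq_square)
qed

lemma power2_norm_diff_shift_le:
  fixes a z z' :: "'a::real_inner"
  assumes "norm (a - z) \<le> \<rho>" "norm (a - z') \<le> \<rho>"
  shows "(norm (a - z'))\<^sup>2 - (norm (a - z))\<^sup>2 \<le> 2 * \<rho> * norm (z' - z)"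
proof -
  have "norm (a - z') - norm (a - z) \<le> norm (z' - z)"
    using norm_triangle_ineq3[of "a - z'" "a - z"] by (simp add: norm_minus_commute)
  then have "(norm (a - z') - norm (a - z)) * (norm (a - z') + norm (a - z))
      \<le> norm (z' - z) * (norm (a - z') + norm (a - z))"
    by (simp add: mult_right_mono)
  then have "(norm (a - z'))\<^sup>2 - (norm (a - z))\<^sup>2 \<le> norm (z' - z) * (norm (a - z') + norm (a - z))"
    by (simp add: power2_eq_square algebra_simps)
  also have "\<dots> \<le> norm (z' - z) * (2 * \<rho>)"
    using assms by (intro mult_left_mono) auto
  finally show ?thesis by (simp add: algebra_simps)
qed

lemma sum_power2_norm_moving_target_le:
  fixes a z :: "nat \<Rightarrow> 'a::real_inner"
  assumes bound: "\<And>t s. 1 \<le> t \<Longrightarrow> t \<le> T + 1 \<Longrightarrow> 1 \<le> s \<Longrightarrow> s \<le> T \<Longrightarrow> norm (a t - z s) \<le> \<rho>"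
    and "1 \<le> T"
  shows "(\<Sum>t=1..T. (norm (a t - z t))\<^sup>2 - (norm (a (t + 1) - z t))\<^sup>2)
     \<le> \<rho> * (\<rho> + 2 * (\<Sum>t=2..T. norm (z t - z (t - 1))))"
proof -
  have "(\<Sum>t=1..n. (norm (a t - z t))\<^sup>2 - (norm (a (t + 1) - z t))\<^sup>2) + (norm (a (n + 1) - z n))\<^sup>2
     \<le> \<rho> * (\<rho> + 2 * (\<Sum>t=2..n. norm (z t - z (t - 1))))" if "1 \<le> n" "n \<le> T" for n
    using that
  proof (induction n rule: nat_induct_at_least)
    case base
    have "norm (a 1 - z 1) \<le> \<rho>" using bound[of 1 1] base by simp
    then show ?case by (simp add: power_mono flip: power2_eq_square)
  next
    case (Suc n)
    have "(norm (a (n + 1) - z (n + 1)))\<^sup>2 - (norm (a (n + 1) - z n))\<^sup>2 \<le> 2 * \<rho> * norm (z (n + 1) - z n)"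
      using Suc by (intro power2_norm_diff_shift_le bound) auto
    with Suc show ?case by (simp add: algebra_simps)
  qed
  from this[OF \<open>1 \<le> T\<close> order.refl] show ?thesis
    using zero_le_power2[of "norm (a (T + 1) - z T)"] by linarith
qed

lemma ereal_weighted_sum_le:
  assumes "0 \<le> \<eta>" "\<And>t. t \<in> I \<Longrightarrow> ereal (s t) \<le> S t"
  shows "ereal (A + \<eta> * (\<Sum>t\<in>I. s t + c t)) \<le> ereal A + ereal \<eta> * (\<Sum>t\<in>I. S t + ereal (c t))"
proof -
  have "ereal (\<Sum>t\<in>I. s t + c t) = (\<Sum>t\<in>I. ereal (s t) + ereal (c t))"
    by simp
  also have "\<dots> \<le> (\<Sum>t\<in>I. S t + ereal (c t))"
    using assms(2) by (intro sum_mono add_right_mono)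
  finally have "ereal (\<Sum>t\<in>I. s t + c t) \<le> (\<Sum>t\<in>I. S t + ereal (c t))" .
  then have "ereal \<eta> * ereal (\<Sum>t\<in>I. s t + c t) \<le> ereal \<eta> * (\<Sum>t\<in>I. S t + ereal (c t))"
    using assms(1) by (intro ereal_mult_left_mono) auto
  then have "ereal A + ereal (\<eta> * (\<Sum>t\<in>I. s t + c t))
      \<le> ereal A + ereal \<eta> * (\<Sum>t\<in>I. S t + ereal (c t))"
    by (intro add_left_mono) simp
  then show ?thesis
    by simp
qed

lemma subgradient_diff_le:
  assumes "g \<in> subdiff f x" "subdiff f y \<noteq> {}"
  shows "real_of_ereal (f x) - real_of_ereal (f y) \<le> inner g (x - y)"
proof -
  from assms obtain a b where "f x = ereal a" "f y = ereal b"
    unfolding subdiff_def by (cases "f x"; cases "f y") auto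
  moreover have "f x + ereal (inner g (y - x)) \<le> f y"
    using assms(1) unfolding subdiff_def by blast
  ultimately show ?thesis
    by (simp add: inner_diff_right)
qed

locale optimistic_gradient_projection =
  fixes C :: "'a::{real_inner, complete_space} set"
    and \<phi> \<phi>h :: "nat \<Rightarrow> 'a \<Rightarrow> ereal"
    and \<eta> L :: real
    and x xt xs xhs :: "nat \<Rightarrow> 'a"
  assumes C_ne: "C \<noteq> {}" and C_closed: "closed C" and C_convex: "convex C"
    and eta_pos: "\<eta> > 0" and L_pos: "L > 0"
    and phi_dom: "\<And>t. C \<subseteq> dom_subdiff (\<phi> t)"
    and phih_dom: "\<And>t. C \<subseteq> dom_subdiff (\<phi>h t)"
    and phih_lip: "\<And>t u v g h. u \<in> C \<Longrightarrow> v \<in> C \<Longrightarrow> g \<in> subdiff (\<phi>h t) u \<Longrightarrow>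
                      h \<in> subdiff (\<phi>h t) v \<Longrightarrow> norm (g - h) \<le> L * norm (u - v)"
    and xt1: "xt 1 \<in> C"
    and grad: "\<And>t. t \<ge> 1 \<Longrightarrow> xs t \<in> subdiff (\<phi> t) (x t)"
    and pred: "\<And>t. t \<ge> 1 \<Longrightarrow> xhs t \<in> subdiff (\<phi>h t) (xt t)"
    and step_t: "\<And>t. t \<ge> 1 \<Longrightarrow> xt (t + 1) = metric_proj C (xt t - \<eta> *\<^sub>R xs t)"
    and step_x: "\<And>t. t \<ge> 1 \<Longrightarrow> x t = metric_proj C (xt t - \<eta> *\<^sub>R xhs t)"
begin

lemma xt_in: "t \<ge> 1 \<Longrightarrow> xt t \<in> C"
proof (induction t rule: nat_induct_at_least)
  case base
  show ?case using xt1 by simp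
next
  case (Suc n)
  then show ?case
    using step_t[of n] metric_proj_closest(1)[OF C_ne C_closed C_convex] by simp
qed

lemma x_in: "t \<ge> 1 \<Longrightarrow> x t \<in> C"
  using step_x metric_proj_closest(1)[OF C_ne C_closed C_convex] by simp

lemma subgradients_at_plays_exist:
  obtains q where "\<And>t. t \<ge> 1 \<Longrightarrow> q t \<in> subdiff (\<phi>h t) (x t)"
proof -
  have "\<forall>t. \<exists>g. t \<ge> 1 \<longrightarrow> g \<in> subdiff (\<phi>h t) (x t)"
    using phih_dom x_in unfolding dom_subdiff_def by blast
  then show ?thesis
    using that by metis
qed

lemma one_step_regret:
  assumes "t \<ge> 1" "z \<in> C" "q \<in> subdiff (\<phi>h t) (x t)"
  shows "real_of_ereal (\<phi> t (x t)) - real_of_ereal (\<phi> t z)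
    \<le> ((norm (xt t - z))\<^sup>2 - (norm (xt (t + 1) - z))\<^sup>2) / (2 * \<eta>)
      + \<eta> * ((norm (xs t - q))\<^sup>2
               + (if \<eta> > 1 / (sqrt 2 * L) then 1 else 0) * L\<^sup>2 * (norm (x t - xt t))\<^sup>2)"
proof -
  have "subdiff (\<phi> t) z \<noteq> {}"
    using phi_dom \<open>z \<in> C\<close> unfolding dom_subdiff_def by blast
  then have "real_of_ereal (\<phi> t (x t)) - real_of_ereal (\<phi> t z) \<le> inner (xs t) (x t - z)"
    using subgradient_diff_le grad[OF \<open>t \<ge> 1\<close>] by blast
  also have "\<dots> \<le> ((norm (xt t - z))\<^sup>2 - (norm (xt (t + 1) - z))\<^sup>2) / (2 * \<eta>)
      + \<eta> * ((norm (xs t - q))\<^sup>2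
               + (if \<eta> > 1 / (sqrt 2 * L) then 1 else 0) * L\<^sup>2 * (norm (x t - xt t))\<^sup>2)"
  proof (rule optimistic_step_bound[OF eta_pos L_pos])
    show "inner (xt t - \<eta> *\<^sub>R xs t - xt (t + 1)) (z - xt (t + 1)) \<le> 0"
      using metric_proj_obtuse[OF C_ne C_closed C_convex \<open>z \<in> C\<close>] step_t[OF \<open>t \<ge> 1\<close>] by simp
    show "inner (xt t - \<eta> *\<^sub>R xhs t - x t) (xt (t + 1) - x t) \<le> 0"
      using metric_proj_obtuse[OF C_ne C_closed C_convex xt_in] step_x[OF \<open>t \<ge> 1\<close>] \<open>t \<ge> 1\<close>
      by simp
    show "norm (q - xhs t) \<le> L * norm (x t - xt t)"
      using phih_lip x_in xt_in assms(1,3) pred by blast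
  qed
  finally show ?thesis .
qed

lemma dynamic_regret_bound:
  assumes "bounded C" "T \<ge> 1" "\<And>t. t \<in> {1..T} \<Longrightarrow> z t \<in> C"
    and q: "\<And>t. t \<ge> 1 \<Longrightarrow> q t \<in> subdiff (\<phi>h t) (x t)"
  shows "(\<Sum>t=1..T. real_of_ereal (\<phi> t (x t)) - real_of_ereal (\<phi> t (z t)))
    \<le> diameter C * (diameter C + 2 * (\<Sum>t=2..T. norm (z t - z (t - 1)))) / (2 * \<eta>)
      + \<eta> * (\<Sum>t=1..T. (norm (xs t - q t))\<^sup>2
               + (if \<eta> > 1 / (sqrt 2 * L) then 1 else 0) * L\<^sup>2 * (norm (x t - xt t))\<^sup>2)"
    (is "_ \<le> ?D / (2 * \<eta>) + \<eta> * (\<Sum>t=1..T. ?e t)")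
proof -
  have "(\<Sum>t=1..T. real_of_ereal (\<phi> t (x t)) - real_of_ereal (\<phi> t (z t)))
      \<le> (\<Sum>t=1..T. ((norm (xt t - z t))\<^sup>2 - (norm (xt (t + 1) - z t))\<^sup>2) / (2 * \<eta>) + \<eta> * ?e t)"
    using assms(3) q by (intro sum_mono one_step_regret) auto
  also have "\<dots> = (\<Sum>t=1..T. (norm (xt t - z t))\<^sup>2 - (norm (xt (t + 1) - z t))\<^sup>2) / (2 * \<eta>)
      + \<eta> * (\<Sum>t=1..T. ?e t)"
    by (subst sum.distrib) (simp only: sum_divide_distrib sum_distrib_left)
  also have "\<dots> \<le> ?D / (2 * \<eta>) + \<eta> * (\<Sum>t=1..T. ?e t)"
  proof -
    have "(\<Sum>t=1..T. (norm (xt t - z t))\<^sup>2 - (norm (xt (t + 1) - z t))\<^sup>2) \<le> ?D"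
      using assms(1-3) xt_in
      by (intro sum_power2_norm_moving_target_le)
         (auto simp: dist_norm[symmetric] intro!: diameter_bounded_bound)
    then show ?thesis
      using eta_pos by (simp add: divide_right_mono)
  qed
  finally show ?thesis .
qed

end

theorem corollary2:
  fixes C :: "'a::{real_inner, complete_space} set"
    and \<phi> \<phi>h :: "nat \<Rightarrow> 'a \<Rightarrow> ereal"
    and \<eta> L :: real
    and x xt xs xhs :: "nat \<Rightarrow> 'a"
    and T :: nat and z :: "nat \<Rightarrow> 'a"
  assumes C_ne: "C \<noteq> {}" and C_closed: "closed C" and C_convex: "convex C"
    and C_bounded: "bounded C"
    and eta_pos: "\<eta> > 0" and L_pos: "L > 0"
    and phi_convex: "\<And>t. ereal_convex (\<phi> t)"
    and phi_dom: "\<And>t. C \<subseteq> dom_subdiff (\<phi> t)"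
    and phih_convex: "\<And>t. ereal_convex (\<phi>h t)"
    and phih_dom: "\<And>t. C \<subseteq> dom_subdiff (\<phi>h t)"
    and phih_lip: "\<And>t u v g h. u \<in> C \<Longrightarrow> v \<in> C \<Longrightarrow> g \<in> subdiff (\<phi>h t) u \<Longrightarrow>
                      h \<in> subdiff (\<phi>h t) v \<Longrightarrow> norm (g - h) \<le> L * norm (u - v)"
    and xt1: "xt 1 \<in> C"
    and grad: "\<And>t. t \<ge> 1 \<Longrightarrow> xs t \<in> subdiff (\<phi> t) (x t)"
    and pred: "\<And>t. t \<ge> 1 \<Longrightarrow> xhs t \<in> subdiff (\<phi>h t) (xt t)"
    and step_t: "\<And>t. t \<ge> 1 \<Longrightarrow> xt (t + 1) = metric_proj C (xt t - \<eta> *\<^sub>R xs t)"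
    and step_x: "\<And>t. t \<ge> 1 \<Longrightarrow> x t = metric_proj C (xt t - \<eta> *\<^sub>R xhs t)"
    and T_ge: "T \<ge> 1"
    and z_in: "\<And>t. t \<in> {1..T} \<Longrightarrow> z t \<in> C"
  shows "ereal (\<Sum>t=1..T. real_of_ereal (\<phi> t (x t)) - real_of_ereal (\<phi> t (z t)))
    \<le> ereal (diameter C * (diameter C + 2 * (\<Sum>t=2..T. norm (z t - z (t - 1)))) / (2 * \<eta>))
       + ereal \<eta> * (\<Sum>t=1..T.
           (SUP (u, g, gh) \<in> {(u, g, gh). u \<in> C \<and> g \<in> subdiff (\<phi> t) u \<and> gh \<in> subdiff (\<phi>h t) u}.
               ereal ((norm (g - gh))\<^sup>2))
           + ereal ((if \<eta> > 1 / (sqrt 2 * L) then 1 else 0) * L\<^sup>2 * (norm (x t - xt t))\<^sup>2))"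
proof -
  interpret optimistic_gradient_projection C \<phi> \<phi>h \<eta> L x xt xs xhs
    using assms by unfold_locales auto
  obtain q where q: "\<And>t. t \<ge> 1 \<Longrightarrow> q t \<in> subdiff (\<phi>h t) (x t)"
    using subgradients_at_plays_exist by blast
  have gap_le_sup: "ereal ((norm (xs t - q t))\<^sup>2)
      \<le> (SUP (u, g, gh) \<in> {(u, g, gh). u \<in> C \<and> g \<in> subdiff (\<phi> t) u \<and> gh \<in> subdiff (\<phi>h t) u}.
            ereal ((norm (g - gh))\<^sup>2))" if "t \<in> {1..T}" for t
    using that x_in grad q by (intro SUP_upper2[of "(x t, xs t, q t)"]) auto
  have "ereal (\<Sum>t=1..T. real_of_ereal (\<phi> t (x t)) - real_of_ereal (\<phi> t (z t)))
    \<le> ereal (diameter C * (diameter C + 2 * (\<Sum>t=2..T. norm (z t - z (t - 1)))) / (2 * \<eta>)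
      + \<eta> * (\<Sum>t=1..T. (norm (xs t - q t))\<^sup>2
               + (if \<eta> > 1 / (sqrt 2 * L) then 1 else 0) * L\<^sup>2 * (norm (x t - xt t))\<^sup>2))"
    using dynamic_regret_bound[where z = z, OF C_bounded T_ge z_in q] by (simp only: ereal_less_eq)
  then show ?thesis
    by (rule order_trans) (rule ereal_weighted_sum_le; use eta_pos gap_le_sup in auto)
qed

end
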